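(* Let $G$ be a finite simple undirected graph, and let $c:V(G)\to \mathbb{R}_{>0}$ and $\kappa:V(G)\to \mathbb{Z}$ be functions such that $0\leq \kappa(u)\leq d_G(u)$ for every vertex $u$ of $G$. Then $$\beta(G,c,\kappa) \leq \sum_{u\in V(G)} \frac{c(u)\big(d_G(u)-\kappa(u)\big)\big(d_G(u)-\kappa(u)+1\big)}{2(d_G(u)+1)}.$$
   Context: $d_G(u)$ denotes the degree of $u$ in $G$, and $[n]=\{1,\dots,n\}$. For a function $\lambda:V(G)\to\mathbb{Z}$, a set $I\subseteq V(G)$ is called $\lambda$-degenerate in $G$ if there is a linear ordering $u_1,\ldots,u_k$ of the vertices of $I$ such that for every $i\in[k]$, $u_i$ has at most $\lambda(u_i)$ neighbors in $\{u_j: j\in[i-1]\}$. Define $$\beta(G,c,\kappa)=\min\Big\{\sum_{u\in V(G)} c(u)\iota(u) : \iota:V(G)\to\mathbb{Z}_{\geq 0} \text{ and } V(G) \text{ is } (\kappa+\iota)\text{-degenerate in } G\Big\}.$$ *)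

theory Defs
  imports Main Complex_Main
begin

definition simple_graph :: "'a set \<Rightarrow> ('a \<Rightarrow> 'a \<Rightarrow> bool) \<Rightarrow> bool" where
  "simple_graph V E \<longleftrightarrow> finite V \<and> (\<forall>u v. E u v \<longrightarrow> E v u) \<and> (\<forall>u. \<not> E u u)
     \<and> (\<forall>u v. E u v \<longrightarrow> u \<in> V \<and> v \<in> V)"

definition degree :: "'a set \<Rightarrow> ('a \<Rightarrow> 'a \<Rightarrow> bool) \<Rightarrow> 'a \<Rightarrow> nat" where
  "degree V E u = card {v \<in> V. E u v}"

definition degenerate :: "('a \<Rightarrow> 'a \<Rightarrow> bool) \<Rightarrow> ('a \<Rightarrow> int) \<Rightarrow> 'a set \<Rightarrow> bool" where
  "degenerate E lam I \<longleftrightarrow> (\<exists>us. distinct us \<and> set us = I \<and>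
     (\<forall>i < length us. int (card {j. j < i \<and> E (us ! i) (us ! j)}) \<le> lam (us ! i)))"

text \<open>beta(G,c,kappa): minimum of sum c(u) iota(u) over iota : V \<rightarrow> Z_{\<ge>0} with V
  (kappa+iota)-degenerate. iota is represented as a nat-valued function; only its
  values on V matter.\<close>
definition beta :: "'a set \<Rightarrow> ('a \<Rightarrow> 'a \<Rightarrow> bool) \<Rightarrow> ('a \<Rightarrow> real) \<Rightarrow> ('a \<Rightarrow> int) \<Rightarrow> real" where
  "beta V E c \<kappa> = Inf {(\<Sum>u\<in>V. c u * real (\<iota> u)) | \<iota> :: 'a \<Rightarrow> nat.
      degenerate E (\<lambda>u. \<kappa> u + int (\<iota> u)) V}"

end

theory Submission
  imports Defs
begin

text \<open>Given an ordering of V, the least admissible \<iota>(u) is the excess of the number of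
  earlier neighbours of u over \<kappa>(u). In a uniformly random ordering the number of earlier
  neighbours of u is uniform on {0..d(u)}, so the expected cost is the sum of c(u) times the
  mean of max 0 (x - \<kappa>(u)) over x \<le> d(u), which is the claimed bound. The averaging is
  derandomised by induction on V: averaged over the choice of the last vertex v, the
  expected cost for V - v plus the cost of v (whose earlier neighbours are all its d(v)
  neighbours) equals the expected cost for V, so some choice of v does no worse.\<close>

definition back_degree :: "('a \<Rightarrow> 'a \<Rightarrow> bool) \<Rightarrow> 'a list \<Rightarrow> nat \<Rightarrow> nat" where
  "back_degree E us i = card {j. j < i \<and> E (us ! i) (us ! j)}"

definition excess :: "nat \<Rightarrow> int \<Rightarrow> real" where
  "excess x k = real (nat (int x - k))"

definition ordering_cost ::
    "('a \<Rightarrow> 'a \<Rightarrow> bool) \<Rightarrow> ('a \<Rightarrow> real) \<Rightarrow> ('a \<Rightarrow> int) \<Rightarrow> 'a list \<Rightarrow> real" where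
  "ordering_cost E c \<kappa> us =
     (\<Sum>i<length us. c (us ! i) * excess (back_degree E us i) (\<kappa> (us ! i)))"

definition mean_excess :: "nat \<Rightarrow> int \<Rightarrow> real" where
  "mean_excess d k = (\<Sum>x\<le>d. excess x k) / (real d + 1)"

definition mean_cost ::
    "'a set \<Rightarrow> ('a \<Rightarrow> 'a \<Rightarrow> bool) \<Rightarrow> ('a \<Rightarrow> real) \<Rightarrow> ('a \<Rightarrow> int) \<Rightarrow> real" where
  "mean_cost V E c \<kappa> = (\<Sum>u\<in>V. c u * mean_excess (degree V E u) (\<kappa> u))"

lemma beta_le_ordering_cost:
  assumes "\<forall>u\<in>V. 0 \<le> c u" and "distinct us" and "set us = V"
  shows "beta V E c \<kappa> \<le> ordering_cost E c \<kappa> us"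
proof -
  define pos where "pos = the_inv_into {..<length us} ((!) us)"
  have bij: "bij_betw ((!) us) {..<length us} V"
    using assms by (intro bij_betw_nth) auto
  then have pos_nth: "pos (us ! i) = i" if "i < length us" for i
    unfolding pos_def using that by (simp add: bij_betw_def the_inv_into_f_f)
  define \<iota> where "\<iota> u = nat (int (back_degree E us (pos u)) - \<kappa> u)" for u
  have "degenerate E (\<lambda>u. \<kappa> u + int (\<iota> u)) V"
    unfolding degenerate_def
    using assms(2,3) by (intro exI[of _ us]) (auto simp: \<iota>_def pos_nth back_degree_def)
  moreover have "(\<Sum>u\<in>V. c u * real (\<iota> u)) = ordering_cost E c \<kappa> us"
    unfolding ordering_cost_def sum.reindex_bij_betw[OF bij, symmetric]
    by (intro sum.cong) (auto simp: \<iota>_def pos_nth excess_def)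
  ultimately have "ordering_cost E c \<kappa> us \<in>
      {\<Sum>u\<in>V. c u * real (f u) | f. degenerate E (\<lambda>u. \<kappa> u + int (f u)) V}"
    unfolding mem_Collect_eq by (intro exI[of _ \<iota>]) simp
  moreover have "bdd_below {\<Sum>u\<in>V. c u * real (f u) | f :: 'a \<Rightarrow> nat. P f}" for P
    using assms(1) by (intro bdd_belowI[of _ 0]) (auto intro!: sum_nonneg)
  ultimately show ?thesis
    unfolding beta_def by (rule cInf_lower)
qed

lemma sum_excess_closed_form:
  assumes "0 \<le> k"
  shows "2 * (\<Sum>x\<le>d. excess x k) = excess d k * (excess d k + 1)"
proof (induction d)
  case 0
  then show ?case using assms by (simp add: excess_def)
next
  case (Suc d)
  show ?case
  proof (cases "k \<le> int d")
    case True
    then have "excess (Suc d) k = excess d k + 1" by (simp add: excess_def)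
    with Suc.IH show ?thesis by (simp add: algebra_simps)
  next
    case False
    then have "excess (Suc d) k = 0" "excess d k = 0" by (auto simp: excess_def)
    with Suc.IH show ?thesis by simp
  qed
qed

lemma mean_excess_closed_form:
  assumes "0 \<le> k" and "k \<le> int d"
  shows "mean_excess d k = (real d - of_int k) * (real d - of_int k + 1) / (2 * (real d + 1))"
proof -
  have "excess d k = real d - of_int k"
    using assms by (simp add: excess_def)
  with sum_excess_closed_form[OF assms(1), of d]
  have "(\<Sum>x\<le>d. excess x k) = (real d - of_int k) * (real d - of_int k + 1) / 2"
    by simp
  then show ?thesis
    unfolding mean_excess_def by (simp only: divide_divide_eq_left mult.commute)
qed

lemma mean_excess_recurrence:
  "excess d k + real d * mean_excess (d - 1) k = (real d + 1) * mean_excess d k"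
proof (cases d)
  case (Suc m)
  have "real d * mean_excess (d - 1) k = (\<Sum>x\<le>m. excess x k)"
    using Suc by (simp add: mean_excess_def add.commute)
  moreover have "(real d + 1) * mean_excess d k = (\<Sum>x\<le>d. excess x k)"
    unfolding mean_excess_def by (simp add: field_simps add_pos_nonneg)
  ultimately show ?thesis using Suc by simp
qed (simp add: mean_excess_def)

lemma back_degree_append_less:
  "i < length us \<Longrightarrow> back_degree E (us @ [v]) i = back_degree E us i"
  unfolding back_degree_def by (intro arg_cong[where f = card]) (auto simp: nth_append)

lemma back_degree_append_last:
  assumes "distinct us"
  shows "back_degree E (us @ [v]) (length us) = card {w \<in> set us. E v w}"
proof -
  have "{w \<in> set us. E v w} = (!) us ` {j. j < length us \<and> E v (us ! j)}"
    by (auto simp: in_set_conv_nth)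
  moreover have "inj_on ((!) us) {j. j < length us \<and> E v (us ! j)}"
    using assms by (intro inj_on_nth) auto
  ultimately show ?thesis
    unfolding back_degree_def by (auto simp: card_image nth_append intro!: arg_cong[where f = card])
qed

lemma ordering_cost_append:
  assumes "distinct us"
  shows "ordering_cost E c \<kappa> (us @ [v]) =
           ordering_cost E c \<kappa> us + c v * excess (card {w \<in> set us. E v w}) (\<kappa> v)"
  unfolding ordering_cost_def
  using assms by (simp add: nth_append back_degree_append_less back_degree_append_last)

lemma degree_Diff_singleton:
  assumes "v \<in> V"
  shows "degree (V - {v}) E u = (if E u v then degree V E u - 1 else degree V E u)"
proof -
  have "{w \<in> V - {v}. E u w} = {w \<in> V. E u w} - {v}" by auto
  with assms show ?thesis
    unfolding degree_def by (auto simp: card_Diff_singleton)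
qed

lemma sum_mean_excess_degree_Diff_singleton:
  assumes "finite V" and "u \<in> V" and "\<not> E u u"
  shows "(\<Sum>v\<in>V - {u}. mean_excess (degree (V - {v}) E u) k) =
           real (degree V E u) * mean_excess (degree V E u - 1) k
           + (real (card V) - 1 - real (degree V E u)) * mean_excess (degree V E u) k"
proof -
  let ?d = "degree V E u"
  define N where "N = {v \<in> V. E u v}"
  have N: "N \<subseteq> V - {u}" "card N = ?d"
    using assms(3) by (auto simp: N_def degree_def)
  have "card (V - {u} - N) = card (V - {u}) - card N"
    using N(1) assms(1) by (intro card_Diff_subset) (auto intro: finite_subset)
  moreover have "card N \<le> card (V - {u})"
    using N(1) assms(1) by (intro card_mono) auto
  ultimately have card_non_neighbours: "real (card (V - {u} - N)) = real (card V) - 1 - real ?d"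
    using assms(1,2) N(2) card_gt_0_iff[of V] by (auto simp: of_nat_diff)
  have "(\<Sum>v\<in>V - {u}. mean_excess (degree (V - {v}) E u) k) =
          (\<Sum>v\<in>V - {u} - N. mean_excess (degree (V - {v}) E u) k)
          + (\<Sum>v\<in>N. mean_excess (degree (V - {v}) E u) k)"
    using N(1) assms(1) by (intro sum.subset_diff) auto
  also have "\<dots> = (\<Sum>v\<in>V - {u} - N. mean_excess ?d k) + (\<Sum>v\<in>N. mean_excess (?d - 1) k)"
    by (intro arg_cong2[where f = "(+)"] sum.cong) (auto simp: N_def degree_Diff_singleton)
  finally show ?thesis
    using card_non_neighbours N(2) by simp
qed

lemma sum_mean_cost_Diff_singleton:
  assumes "finite V" and "\<forall>u. \<not> E u u"
  shows "(\<Sum>v\<in>V. mean_cost (V - {v}) E c \<kappa> + c v * excess (degree V E v) (\<kappa> v)) =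
           real (card V) * mean_cost V E c \<kappa>"
proof -
  let ?F = "\<lambda>W u. mean_excess (degree W E u) (\<kappa> u)"
  let ?d = "\<lambda>u. degree V E u"
  have "(\<Sum>v\<in>V. mean_cost (V - {v}) E c \<kappa>) =
          (\<Sum>v\<in>V. \<Sum>u\<in>{u \<in> V. v \<noteq> u}. c u * ?F (V - {v}) u)"
    unfolding mean_cost_def by (intro sum.cong refl) auto
  also have "\<dots> = (\<Sum>u\<in>V. \<Sum>v\<in>{v \<in> V. v \<noteq> u}. c u * ?F (V - {v}) u)"
    by (rule sum.swap_restrict[OF assms(1) assms(1)])
  also have "\<dots> = (\<Sum>u\<in>V. c u * (real (?d u) * mean_excess (?d u - 1) (\<kappa> u)
                    + (real (card V) - 1 - real (?d u)) * ?F V u))"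
  proof (intro sum.cong refl)
    fix u assume "u \<in> V"
    moreover have "{v \<in> V. v \<noteq> u} = V - {u}" by auto
    ultimately show "(\<Sum>v\<in>{v \<in> V. v \<noteq> u}. c u * ?F (V - {v}) u) =
        c u * (real (?d u) * mean_excess (?d u - 1) (\<kappa> u)
          + (real (card V) - 1 - real (?d u)) * ?F V u)"
      using assms by (simp add: sum_distrib_left[symmetric] sum_mean_excess_degree_Diff_singleton)
  qed
  also have "\<dots> = (\<Sum>u\<in>V. real (card V) * (c u * ?F V u) - c u * excess (?d u) (\<kappa> u))"
  proof (intro sum.cong refl)
    fix u
    show "c u * (real (?d u) * mean_excess (?d u - 1) (\<kappa> u)
            + (real (card V) - 1 - real (?d u)) * ?F V u) =
          real (card V) * (c u * ?F V u) - c u * excess (?d u) (\<kappa> u)"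
      using arg_cong[OF mean_excess_recurrence[of "?d u" "\<kappa> u"], of "(*) (c u)"]
      by (simp add: algebra_simps)
  qed
  finally show ?thesis
    by (simp add: sum.distrib sum_subtractf sum_distrib_left mean_cost_def)
qed

lemma exists_ordering_cost_le_mean_cost:
  assumes "finite V" and "\<forall>u. \<not> E u u"
  shows "\<exists>us. distinct us \<and> set us = V \<and> ordering_cost E c \<kappa> us \<le> mean_cost V E c \<kappa>"
  using assms(1)
proof (induction rule: finite_psubset_induct)
  case (psubset V)
  show ?case
  proof (cases "V = {}")
    case True
    then show ?thesis by (intro exI[of _ "[]"]) (simp add: ordering_cost_def mean_cost_def)
  next
    case False
    define cost_with_last where
      "cost_with_last v = mean_cost (V - {v}) E c \<kappa> + c v * excess (degree V E v) (\<kappa> v)" for v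
    have "Min (cost_with_last ` V) \<in> cost_with_last ` V"
      using psubset.hyps False by (intro Min_in) auto
    then obtain v where v: "v \<in> V" "cost_with_last v = Min (cost_with_last ` V)"
      by auto
    have "real (card V) * cost_with_last v \<le> (\<Sum>w\<in>V. cost_with_last w)"
      using psubset.hyps by (intro sum_bounded_below) (simp add: v(2))
    also have "\<dots> = real (card V) * mean_cost V E c \<kappa>"
      unfolding cost_with_last_def using psubset.hyps assms(2) by (rule sum_mean_cost_Diff_singleton)
    finally have "cost_with_last v \<le> mean_cost V E c \<kappa>"
      using psubset.hyps False by (simp add: card_gt_0_iff)
    obtain us where us: "distinct us" "set us = V - {v}"
        "ordering_cost E c \<kappa> us \<le> mean_cost (V - {v}) E c \<kappa>"
      using psubset.IH[of "V - {v}"] v(1) by blast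
    have "card {w \<in> set us. E v w} = degree V E v"
      unfolding degree_def us(2) using assms(2) by (auto intro!: arg_cong[where f = card])
    with us have "ordering_cost E c \<kappa> (us @ [v]) \<le> cost_with_last v"
      by (simp add: ordering_cost_append cost_with_last_def)
    with us v(1) \<open>cost_with_last v \<le> mean_cost V E c \<kappa>\<close> show ?thesis
      by (intro exI[of _ "us @ [v]"]) auto
  qed
qed

theorem theorem1:
  fixes V :: "'a set" and E :: "'a \<Rightarrow> 'a \<Rightarrow> bool"
    and c :: "'a \<Rightarrow> real" and \<kappa> :: "'a \<Rightarrow> int"
  assumes "simple_graph V E"
    and "\<forall>u\<in>V. c u > 0"
    and "\<forall>u\<in>V. 0 \<le> \<kappa> u \<and> \<kappa> u \<le> int (degree V E u)"
  shows "beta V E c \<kappa> \<le>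
    (\<Sum>u\<in>V. c u * (real (degree V E u) - of_int (\<kappa> u))
                 * (real (degree V E u) - of_int (\<kappa> u) + 1)
              / (2 * (real (degree V E u) + 1)))"
proof -
  have "finite V" and "\<forall>u. \<not> E u u"
    using assms(1) unfolding simple_graph_def by auto
  then obtain us where us:
      "distinct us" "set us = V" "ordering_cost E c \<kappa> us \<le> mean_cost V E c \<kappa>"
    using exists_ordering_cost_le_mean_cost by blast
  have "beta V E c \<kappa> \<le> ordering_cost E c \<kappa> us"
    using assms(2) us(1,2) by (intro beta_le_ordering_cost) (auto simp: less_imp_le)
  also note us(3)
  finally show ?thesis
    unfolding mean_cost_def using assms(3) by (simp add: mean_excess_closed_form mult.assoc)
qed

end
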